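(* Let $\psi\in\mathrm{SO}^0(2,1)$. Then there exists $K$ such that, for any $\epsilon>0$, an element $g\in\mathrm{SO}^0(2,1)$ is $\epsilon/K$-hyperbolic whenever $\psi g\psi^{-1}$ is $\epsilon$-hyperbolic.
   Context: $\mathbb{R}^{2,1}$ is $\mathbb{R}^3$ with $\mathbb{B}(u,v)=u_1v_1+u_2v_2-u_3v_3$; $\mathrm{SO}^0(2,1)$ is the identity component of its linear isometry group; $\rho$ is Euclidean distance. $S^1=\{(\cos\phi,\sin\phi,1)\}$. $g\in\mathrm{SO}^0(2,1)$ is hyperbolic if it has real distinct eigenvalues, necessarily $\lambda<1<\lambda^{-1}$; $x^-(g)$, $x^+(g)$ are the eigenvectors on $S^1$ for $\lambda$, $\lambda^{-1}$. $g$ is $\epsilon$-hyperbolic if it is hyperbolic and $\rho(x^+(g),x^-(g))\ge\epsilon$. *)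

theory Defs
  imports "HOL-Analysis.Analysis"
begin

definition Bform :: "real^3 \<Rightarrow> real^3 \<Rightarrow> real" where
  "Bform u v = u$1 * v$1 + u$2 * v$2 - u$3 * v$3"

definition O21 :: "(real^3^3) set" where
  "O21 = {g. invertible g \<and> (\<forall>u v. Bform (g *v u) (g *v v) = Bform u v)}"

definition SO0_21 :: "(real^3^3) set" where
  "SO0_21 = connected_component_set O21 (mat 1)"

definition S1 :: "(real^3) set" where
  "S1 = range (\<lambda>\<phi>. vector [cos \<phi>, sin \<phi>, 1])"

definition hyperbolic :: "real^3^3 \<Rightarrow> bool" where
  "hyperbolic g \<longleftrightarrow> (\<exists>a b c. a \<noteq> b \<and> b \<noteq> c \<and> a \<noteq> c \<and>
      (\<forall>l\<in>{a,b,c}. \<exists>v. v \<noteq> 0 \<and> g *v v = l *\<^sub>R v))"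

definition x_plus :: "real^3^3 \<Rightarrow> real^3" where
  "x_plus g = (THE x. x \<in> S1 \<and> (\<exists>l. 1 < l \<and> g *v x = l *\<^sub>R x))"

definition x_minus :: "real^3^3 \<Rightarrow> real^3" where
  "x_minus g = (THE x. x \<in> S1 \<and> (\<exists>l. 0 < l \<and> l < 1 \<and> g *v x = l *\<^sub>R x))"

definition eps_hyperbolic :: "real \<Rightarrow> real^3^3 \<Rightarrow> bool" where
  "eps_hyperbolic \<epsilon> g \<longleftrightarrow> hyperbolic g \<and> dist (x_plus g) (x_minus g) \<ge> \<epsilon>"

end

theory Submission
  imports Defs
begin

(*
  A hyperbolic g in SO0(2,1) has an eigenvalue l <> +-1; its eigenvectors are null, and so are
  those for 1/l, which is an eigenvalue because g^T J g = J. Projected radially onto S1 they give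
  x+(g) and x-(g), and these are the only eigenvectors on S1 with eigenvalue > 1 resp. < 1, since
  the eigenvalues of two distinct points of S1 multiply to 1. Conjugation by psi moves
  eigenvectors by psi, so x+-(psi g psi^-1) is the radial projection of psi x+-(g) onto S1.
  As psi lies in the identity component, the third coordinate of psi x stays positive on S1,
  hence by compactness bounded below; so x |-> proj(psi x) is Lipschitz on S1, and its Lipschitz
  constant is the K of the theorem.
*)

lemma mem_S1_iff: "x \<in> S1 \<longleftrightarrow> x$3 = 1 \<and> (x$1)\<^sup>2 + (x$2)\<^sup>2 = 1"
proof
  assume "x \<in> S1"
  then show "x$3 = 1 \<and> (x$1)\<^sup>2 + (x$2)\<^sup>2 = 1" by (auto simp: S1_def)
next
  assume x: "x$3 = 1 \<and> (x$1)\<^sup>2 + (x$2)\<^sup>2 = 1"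
  then obtain t where "x$1 = cos t" "x$2 = sin t" using sincos_total_2pi by metis
  with x have "x = vector [cos t, sin t, 1]" by (simp add: vec_eq_iff forall_3)
  then show "x \<in> S1" by (simp add: S1_def)
qed

lemma norm_S1: "x \<in> S1 \<Longrightarrow> norm x = sqrt 2"
  by (simp add: norm_eq_sqrt_inner inner_vec_def sum_3 mem_S1_iff power2_eq_square[symmetric])

lemma compact_S1: "compact S1"
  unfolding compact_eq_bounded_closed
proof
  show "bounded S1" unfolding bounded_iff using norm_S1 by (metis order_refl)
  have "closed ({x. x$3 = 1} \<inter> {x::real^3. (x$1)\<^sup>2 + (x$2)\<^sup>2 = 1})"
    by (intro closed_Int closed_Collect_eq continuous_intros)
  moreover have "S1 = {x. x$3 = 1} \<inter> {x. (x$1)\<^sup>2 + (x$2)\<^sup>2 = 1}" by (auto simp: mem_S1_iff)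
  ultimately show "closed S1" by simp
qed

definition proj_S1 :: "real^3 \<Rightarrow> real^3" where
  "proj_S1 v = (1 / v$3) *\<^sub>R v"

definition preserves_Bform :: "real^3^3 \<Rightarrow> bool" where
  "preserves_Bform g \<longleftrightarrow> (\<forall>u v. Bform (g *v u) (g *v v) = Bform u v)"

lemma O21_iff: "g \<in> O21 \<longleftrightarrow> invertible g \<and> preserves_Bform g"
  by (simp add: O21_def preserves_Bform_def)

lemma SO0_21_subset_O21: "SO0_21 \<subseteq> O21"
  unfolding SO0_21_def by (rule connected_component_subset)

lemma mat_1_in_SO0_21: "mat 1 \<in> SO0_21"
proof -
  have "mat 1 \<in> O21" by (auto simp: O21_iff preserves_Bform_def invertible_def)
  then show ?thesis by (simp add: SO0_21_def)
qed

lemma Bform_scaleR: "Bform (a *\<^sub>R u) (b *\<^sub>R v) = a * b * Bform u v"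
  by (simp add: Bform_def algebra_simps)

lemma Bform_S1_self: "x \<in> S1 \<Longrightarrow> Bform x x = 0"
  by (simp add: mem_S1_iff Bform_def power2_eq_square)

lemma Bform_S1_neq_zero:
  assumes "x \<in> S1" "y \<in> S1" "x \<noteq> y"
  shows "Bform x y \<noteq> 0"
proof
  assume "Bform x y = 0"
  with assms(1,2) have "(x$1 - y$1)\<^sup>2 + (x$2 - y$2)\<^sup>2 = 0"
    by (simp add: mem_S1_iff Bform_def power2_eq_square algebra_simps)
  then have "x$1 = y$1" "x$2 = y$2" by (simp_all add: sum_power2_eq_zero_iff)
  with assms show False by (simp add: mem_S1_iff vec_eq_iff forall_3)
qed

lemma null_vector_third_nonzero:
  assumes "Bform v v = 0" "v \<noteq> 0"
  shows "v$3 \<noteq> 0"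
proof
  assume "v$3 = 0"
  with assms(1) have "(v$1)\<^sup>2 + (v$2)\<^sup>2 = 0" by (simp add: Bform_def power2_eq_square)
  then have "v$1 = 0" "v$2 = 0" by (simp_all add: sum_power2_eq_zero_iff)
  with \<open>v$3 = 0\<close> assms(2) show False by (simp add: vec_eq_iff forall_3)
qed

lemma proj_S1_in_S1:
  assumes "Bform v v = 0" "v$3 \<noteq> 0"
  shows "proj_S1 v \<in> S1"
proof -
  have "(v$1)\<^sup>2 + (v$2)\<^sup>2 = (v$3)\<^sup>2" using assms(1) by (simp add: Bform_def power2_eq_square)
  then have "(v$1 / v$3)\<^sup>2 + (v$2 / v$3)\<^sup>2 = 1"
    using assms(2) by (simp add: power_divide add_divide_distrib[symmetric] del: divide_eq_1_iff)
  with assms(2) show ?thesis by (simp add: proj_S1_def mem_S1_iff)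
qed

lemma O21_S1_third_nonzero:
  assumes "g \<in> O21" "x \<in> S1"
  shows "(g *v x)$3 \<noteq> 0"
proof (rule null_vector_third_nonzero)
  show "Bform (g *v x) (g *v x) = 0"
    using assms by (simp add: O21_iff preserves_Bform_def Bform_S1_self)
  have "x \<noteq> 0" using assms(2) by (auto simp: mem_S1_iff)
  with assms(1) show "g *v x \<noteq> 0"
    using inj_matrix_vector_mult[of g] by (auto simp: O21_iff inj_on_def)
qed

lemma SO0_21_S1_third_pos:
  assumes "g \<in> SO0_21" "x \<in> S1"
  shows "(g *v x)$3 > 0"
proof (rule ccontr)
  assume nonpos: "\<not> (g *v x)$3 > 0"
  define f where "f h = (h *v x)$3" for h :: "real^3^3"
  have "continuous_on SO0_21 f" unfolding f_def matrix_vector_mult_def by (intro continuous_intros)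
  then have "connected (f ` SO0_21)"
    by (intro connected_continuous_image) (simp_all add: SO0_21_def)
  moreover have "f (mat 1) = 1" "f g \<le> 0" using assms nonpos by (simp_all add: f_def mem_S1_iff)
  ultimately have "0 \<in> f ` SO0_21"
    using connectedD_interval[of "f ` SO0_21" "f g" 1 0] mat_1_in_SO0_21 assms(1) by force
  then show False
    using O21_S1_third_nonzero SO0_21_subset_O21 assms(2) by (auto simp: f_def)
qed

lemma eigenvalue_of_transpose:
  fixes A :: "real^'n^'n"
  assumes "v \<noteq> 0" "transpose A *v v = c *\<^sub>R v"
  shows "\<exists>w. w \<noteq> 0 \<and> A *v w = c *\<^sub>R w"
proof -
  define B where "B = A - c *\<^sub>R mat 1"
  have scal: "(c *\<^sub>R mat 1 :: real^'n^'n) *v u = c *\<^sub>R u" for u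
    by (metis matrix_scaleR_vector_ac matrix_vector_mul_lid)
  have "transpose B = transpose A - c *\<^sub>R mat 1"
    by (simp add: B_def transpose_def vec_eq_iff mat_def)
  then have "transpose B *v v = 0"
    using assms(2) by (simp add: matrix_vector_mult_diff_rdistrib scal)
  then have "\<not> (\<exists>C. C ** transpose B = mat 1)"
    using assms(1) matrix_left_invertible_ker by blast
  then have "\<not> (\<exists>C. C ** B = mat 1)"
    by (simp add: left_invertible_transpose matrix_left_right_inverse)
  then obtain w where "w \<noteq> 0" "B *v w = 0"
    using matrix_left_invertible_ker by blast
  then show ?thesis
    by (intro exI[of _ w]) (simp add: B_def matrix_vector_mult_diff_rdistrib scal)
qed

definition J21 :: "real^3 \<Rightarrow> real^3" where
  "J21 v = (\<chi> i. if i = 3 then - v$i else v$i)"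

lemma Bform_eq_inner_J21: "Bform u v = u \<bullet> J21 v"
  by (simp add: Bform_def J21_def inner_vec_def sum_3)

lemma preserves_Bform_transpose_J21:
  assumes "preserves_Bform g"
  shows "transpose g *v J21 (g *v v) = J21 v"
proof (rule vector_eq_ldot[THEN iffD1, rule_format])
  fix u
  have "u \<bullet> (transpose g *v J21 (g *v v)) = Bform (g *v u) (g *v v)"
    by (simp add: Bform_eq_inner_J21) (metis inner_commute dot_lmul_matrix)
  also have "\<dots> = u \<bullet> J21 v" using assms by (simp add: preserves_Bform_def Bform_eq_inner_J21)
  finally show "u \<bullet> (transpose g *v J21 (g *v v)) = u \<bullet> J21 v" .
qed

lemma preserves_Bform_eigenvalue_inverse:
  assumes "preserves_Bform g" "v \<noteq> 0" "g *v v = l *\<^sub>R v" "l \<noteq> 0"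
  shows "\<exists>w. w \<noteq> 0 \<and> g *v w = (1 / l) *\<^sub>R w"
proof (rule eigenvalue_of_transpose)
  have J21_scaleR: "J21 (c *\<^sub>R u) = c *\<^sub>R J21 u" for c u by (simp add: J21_def vec_eq_iff)
  show "J21 v \<noteq> 0" using assms(2) by (simp add: J21_def vec_eq_iff forall_3)
  have "l *\<^sub>R (transpose g *v J21 v) = J21 v"
    using preserves_Bform_transpose_J21[OF assms(1), of v] assms(3)
    by (simp add: J21_scaleR matrix_vector_mult_scaleR)
  then have "(1 / l) *\<^sub>R (l *\<^sub>R (transpose g *v J21 v)) = (1 / l) *\<^sub>R J21 v" by simp
  then show "transpose g *v J21 v = (1 / l) *\<^sub>R J21 v"
    using assms(4) by (simp del: transpose_matrix_vector)
qed

lemma SO0_21_eigenvector_S1: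
  assumes "g \<in> SO0_21" "v \<noteq> 0" "g *v v = l *\<^sub>R v" "l\<^sup>2 \<noteq> 1"
  shows "proj_S1 v \<in> S1 \<and> g *v proj_S1 v = l *\<^sub>R proj_S1 v \<and> 0 < l"
proof -
  have "preserves_Bform g" using assms(1) SO0_21_subset_O21 by (auto simp: O21_iff)
  then have "Bform v v = l\<^sup>2 * Bform v v"
    using assms(3) by (metis Bform_scaleR power2_eq_square preserves_Bform_def)
  with assms(4) have null: "Bform v v = 0" by simp
  then have S1: "proj_S1 v \<in> S1"
    using assms(2) by (simp add: proj_S1_in_S1 null_vector_third_nonzero)
  have eig: "g *v proj_S1 v = l *\<^sub>R proj_S1 v"
    using assms(3) by (simp add: proj_S1_def matrix_vector_mult_scaleR)
  have "(g *v proj_S1 v)$3 > 0" using SO0_21_S1_third_pos[OF assms(1) S1] .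
  with eig S1 have "0 < l" by (simp add: mem_S1_iff)
  with S1 eig show ?thesis by blast
qed

lemma preserves_Bform_S1_eigenvalues_inverse:
  assumes "preserves_Bform g" "x \<in> S1" "y \<in> S1" "x \<noteq> y"
    and "g *v x = l *\<^sub>R x" "g *v y = m *\<^sub>R y"
  shows "l * m = 1"
proof -
  have "Bform x y = l * m * Bform x y"
    using assms(1,5,6) by (metis Bform_scaleR preserves_Bform_def)
  with Bform_S1_neq_zero[OF assms(2-4)] show ?thesis by simp
qed

lemma x_plus_eqI:
  assumes "preserves_Bform g" "x \<in> S1" "1 < l" "g *v x = l *\<^sub>R x"
  shows "x_plus g = x"
  unfolding x_plus_def
proof (rule the_equality)
  show "x \<in> S1 \<and> (\<exists>l>1. g *v x = l *\<^sub>R x)" using assms by blast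
  fix y assume "y \<in> S1 \<and> (\<exists>m>1. g *v y = m *\<^sub>R y)"
  then obtain m where "y \<in> S1" "1 < m" "g *v y = m *\<^sub>R y" by blast
  with assms show "y = x"
    using preserves_Bform_S1_eigenvalues_inverse[of g x y l m] less_1_mult[of l m] by force
qed

lemma x_minus_eqI:
  assumes "preserves_Bform g" "x \<in> S1" "0 < l" "l < 1" "g *v x = l *\<^sub>R x"
  shows "x_minus g = x"
  unfolding x_minus_def
proof (rule the_equality)
  show "x \<in> S1 \<and> (\<exists>l. 0 < l \<and> l < 1 \<and> g *v x = l *\<^sub>R x)" using assms by blast
  fix y assume "y \<in> S1 \<and> (\<exists>m. 0 < m \<and> m < 1 \<and> g *v y = m *\<^sub>R y)"
  then obtain m where "y \<in> S1" "0 < m" "m < 1" "g *v y = m *\<^sub>R y" by blast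
  moreover have "l * m < 1" using assms(3,4) \<open>0 < m\<close> \<open>m < 1\<close> by (metis mult_strict_mono' mult_1 less_eq_real_def)
  ultimately show "y = x"
    using assms preserves_Bform_S1_eigenvalues_inverse[of g x y l m] by force
qed

lemma hyperbolic_SO0_21_eigenvectors:
  assumes "g \<in> SO0_21" "hyperbolic g"
  obtains x l y m where "x \<in> S1" "1 < l" "g *v x = l *\<^sub>R x"
    and "y \<in> S1" "0 < m" "m < 1" "g *v y = m *\<^sub>R y"
proof -
  obtain a b c where "a \<noteq> b" "b \<noteq> c" "a \<noteq> c"
    and eig: "\<forall>l\<in>{a,b,c}. \<exists>v. v \<noteq> 0 \<and> g *v v = l *\<^sub>R v"
    using assms(2) unfolding hyperbolic_def by blast
  then have "\<exists>l\<in>{a,b,c}. l\<^sup>2 \<noteq> 1" by (auto simp: power2_eq_1_iff)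
  then obtain l v where l: "l\<^sup>2 \<noteq> 1" and v: "v \<noteq> 0" "g *v v = l *\<^sub>R v" using eig by blast
  then have x: "proj_S1 v \<in> S1" "g *v proj_S1 v = l *\<^sub>R proj_S1 v" "0 < l"
    using SO0_21_eigenvector_S1[OF assms(1)] by blast+
  have "preserves_Bform g" using assms(1) SO0_21_subset_O21 by (auto simp: O21_iff)
  then obtain w where "w \<noteq> 0" "g *v w = (1 / l) *\<^sub>R w"
    using preserves_Bform_eigenvalue_inverse v x(3) by blast
  moreover have "(1 / l)\<^sup>2 \<noteq> 1" using l by (simp add: power_one_over)
  ultimately have y: "proj_S1 w \<in> S1" "g *v proj_S1 w = (1 / l) *\<^sub>R proj_S1 w"
    using SO0_21_eigenvector_S1[OF assms(1)] by blast+
  have "l \<noteq> 1" using l by auto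
  then consider "1 < l" | "l < 1" by linarith
  then show ?thesis
  proof cases
    case 1
    then have "0 < 1 / l" "1 / l < 1" by simp_all
    with 1 show ?thesis using that x y by blast
  next
    case 2
    then have "1 < 1 / l" using x(3) by simp
    then show ?thesis using that x y \<open>l < 1\<close> by blast
  qed
qed

lemma matrix_inv_inverse:
  assumes "invertible (A :: 'a::semiring_1^'n^'n)"
  shows "A ** matrix_inv A = mat 1" "matrix_inv A ** A = mat 1"
  using someI_ex[OF assms[unfolded invertible_def]] by (simp_all add: matrix_inv_def)

lemma conj_mult_vector:
  fixes \<psi> g :: "real^'n^'n"
  assumes "invertible \<psi>"
  shows "(\<psi> ** g ** matrix_inv \<psi>) *v (\<psi> *v v) = \<psi> *v (g *v v)"
proof -
  have "matrix_inv \<psi> *v (\<psi> *v v) = v"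
    by (simp add: matrix_vector_mul_assoc matrix_inv_inverse(2)[OF assms])
  then show ?thesis by (simp add: matrix_vector_mul_assoc[symmetric])
qed

lemma eigenvalue_conj_iff:
  fixes \<psi> g :: "real^'n^'n"
  assumes "invertible \<psi>"
  shows "(\<exists>v. v \<noteq> 0 \<and> (\<psi> ** g ** matrix_inv \<psi>) *v v = l *\<^sub>R v) \<longleftrightarrow> (\<exists>v. v \<noteq> 0 \<and> g *v v = l *\<^sub>R v)"
proof
  assume "\<exists>v. v \<noteq> 0 \<and> (\<psi> ** g ** matrix_inv \<psi>) *v v = l *\<^sub>R v"
  then obtain v where v: "v \<noteq> 0" "(\<psi> ** g ** matrix_inv \<psi>) *v v = l *\<^sub>R v" by blast
  define w where "w = matrix_inv \<psi> *v v"
  have \<psi>w: "\<psi> *v w = v" by (simp add: w_def matrix_vector_mul_assoc matrix_inv_inverse[OF assms])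
  have "\<psi> *v (g *v w) = \<psi> *v (l *\<^sub>R w)"
    using v(2) conj_mult_vector[OF assms, of g w] by (simp add: \<psi>w matrix_vector_mult_scaleR)
  then have "g *v w = l *\<^sub>R w" using inj_matrix_vector_mult[OF assms] by (simp add: inj_eq)
  moreover have "w \<noteq> 0" using \<psi>w v(1) by auto
  ultimately show "\<exists>v. v \<noteq> 0 \<and> g *v v = l *\<^sub>R v" by blast
next
  assume "\<exists>v. v \<noteq> 0 \<and> g *v v = l *\<^sub>R v"
  then obtain v where "v \<noteq> 0" "g *v v = l *\<^sub>R v" by blast
  then have "\<psi> *v v \<noteq> 0" "(\<psi> ** g ** matrix_inv \<psi>) *v (\<psi> *v v) = l *\<^sub>R (\<psi> *v v)"
    using inj_matrix_vector_mult[OF assms] conj_mult_vector[OF assms]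
    by (auto simp: inj_on_def matrix_vector_mult_scaleR)
  then show "\<exists>v. v \<noteq> 0 \<and> (\<psi> ** g ** matrix_inv \<psi>) *v v = l *\<^sub>R v" by blast
qed

lemma hyperbolic_conj_iff:
  "invertible \<psi> \<Longrightarrow> hyperbolic (\<psi> ** g ** matrix_inv \<psi>) \<longleftrightarrow> hyperbolic g"
  unfolding hyperbolic_def by (simp add: eigenvalue_conj_iff)

lemma preserves_Bform_conj:
  assumes "invertible \<psi>" "preserves_Bform \<psi>" "preserves_Bform g"
  shows "preserves_Bform (\<psi> ** g ** matrix_inv \<psi>)"
  unfolding preserves_Bform_def
proof (intro allI)
  fix u v
  have \<psi>_inv: "\<psi> *v (matrix_inv \<psi> *v w) = w" for w
    by (simp add: matrix_vector_mul_assoc matrix_inv_inverse[OF assms(1)])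
  have "Bform ((\<psi> ** g ** matrix_inv \<psi>) *v u) ((\<psi> ** g ** matrix_inv \<psi>) *v v)
      = Bform (g *v (matrix_inv \<psi> *v u)) (g *v (matrix_inv \<psi> *v v))"
    using assms(2) by (simp add: matrix_vector_mul_assoc[symmetric] preserves_Bform_def)
  also have "\<dots> = Bform (\<psi> *v (matrix_inv \<psi> *v u)) (\<psi> *v (matrix_inv \<psi> *v v))"
    using assms(2,3) by (simp add: preserves_Bform_def)
  also have "\<dots> = Bform u v" by (simp add: \<psi>_inv)
  finally show "Bform ((\<psi> ** g ** matrix_inv \<psi>) *v u) ((\<psi> ** g ** matrix_inv \<psi>) *v v) = Bform u v" .
qed

lemma conj_eigenvector_S1:
  assumes "\<psi> \<in> SO0_21" "x \<in> S1" "g *v x = l *\<^sub>R x"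
  shows "proj_S1 (\<psi> *v x) \<in> S1"
    and "(\<psi> ** g ** matrix_inv \<psi>) *v proj_S1 (\<psi> *v x) = l *\<^sub>R proj_S1 (\<psi> *v x)"
proof -
  have \<psi>: "invertible \<psi>" "preserves_Bform \<psi>" using assms(1) SO0_21_subset_O21 by (auto simp: O21_iff)
  show "proj_S1 (\<psi> *v x) \<in> S1"
    using \<psi>(2) assms(2) SO0_21_S1_third_pos[OF assms(1,2)]
    by (intro proj_S1_in_S1) (simp_all add: preserves_Bform_def Bform_S1_self)
  show "(\<psi> ** g ** matrix_inv \<psi>) *v proj_S1 (\<psi> *v x) = l *\<^sub>R proj_S1 (\<psi> *v x)"
    using assms(3) by (simp add: proj_S1_def matrix_vector_mult_scaleR conj_mult_vector[OF \<psi>(1)])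
qed

lemma dist_proj_S1_le:
  assumes "0 < c" "c \<le> a$3" "c \<le> b$3" "norm b \<le> B"
  shows "dist (proj_S1 a) (proj_S1 b) \<le> (1 / c + B / c\<^sup>2) * norm (a - b)"
proof -
  define \<alpha> \<beta> where "\<alpha> = a$3" and "\<beta> = b$3"
  have pos: "0 < \<alpha>" "0 < \<beta>" using assms unfolding \<alpha>_def \<beta>_def by linarith+
  have "proj_S1 a - proj_S1 b = (1 / \<alpha>) *\<^sub>R (a - b) + (1 / \<alpha> - 1 / \<beta>) *\<^sub>R b"
    by (simp add: proj_S1_def \<alpha>_def \<beta>_def algebra_simps)
  also have "1 / \<alpha> - 1 / \<beta> = (\<beta> - \<alpha>) / (\<alpha> * \<beta>)" using pos by (simp add: field_simps)
  finally have "dist (proj_S1 a) (proj_S1 b)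
      = norm ((1 / \<alpha>) *\<^sub>R (a - b) + ((\<beta> - \<alpha>) / (\<alpha> * \<beta>)) *\<^sub>R b)"
    by (simp add: dist_norm)
  also have "\<dots> \<le> norm (a - b) / \<alpha> + \<bar>\<beta> - \<alpha>\<bar> * norm b / (\<alpha> * \<beta>)"
    using pos norm_triangle_ineq[of "(1 / \<alpha>) *\<^sub>R (a - b)" "((\<beta> - \<alpha>) / (\<alpha> * \<beta>)) *\<^sub>R b"]
    by (simp add: abs_mult)
  also have "\<dots> \<le> norm (a - b) / c + norm (a - b) * B / c\<^sup>2"
  proof (intro add_mono frac_le)
    have "\<bar>\<beta> - \<alpha>\<bar> \<le> norm (a - b)"
      using component_le_norm_cart[of "a - b" 3] by (simp add: \<alpha>_def \<beta>_def abs_minus_commute)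
    then show "\<bar>\<beta> - \<alpha>\<bar> * norm b \<le> norm (a - b) * B" using assms(4) by (simp add: mult_mono)
    show "c\<^sup>2 \<le> \<alpha> * \<beta>"
      using mult_mono[of c \<alpha> c \<beta>] assms(1-3) by (simp add: \<alpha>_def \<beta>_def power2_eq_square)
  qed (use assms pos order_trans[OF norm_ge_zero assms(4)] in \<open>auto simp: \<alpha>_def \<beta>_def\<close>)
  finally show ?thesis by (simp add: algebra_simps)
qed

lemma SO0_21_proj_S1_lipschitz:
  assumes "\<psi> \<in> SO0_21"
  shows "\<exists>K>0. \<forall>x\<in>S1. \<forall>y\<in>S1. dist (proj_S1 (\<psi> *v x)) (proj_S1 (\<psi> *v y)) \<le> K * dist x y"
proof -
  have cont: "continuous_on S1 ((*v) \<psi>)" by (intro linear_continuous_on matrix_vector_mul_bounded_linear)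
  have "S1 \<noteq> {}" by (auto simp: S1_def)
  then obtain x0 where "x0 \<in> S1" and x0: "\<forall>x\<in>S1. (\<psi> *v x0)$3 \<le> (\<psi> *v x)$3"
    using continuous_attains_inf[OF compact_S1, of "\<lambda>x. (\<psi> *v x)$3"] cont
    by (auto intro: continuous_on_component)
  define c where "c = (\<psi> *v x0)$3"
  have "0 < c" unfolding c_def using SO0_21_S1_third_pos[OF assms \<open>x0 \<in> S1\<close>] .
  obtain B where B: "\<forall>x\<in>S1. norm (\<psi> *v x) \<le> B"
    using compact_imp_bounded[OF compact_continuous_image[OF cont compact_S1]]
    by (auto simp: bounded_iff)
  obtain M where "0 < M" and M: "\<And>v. norm (\<psi> *v v) \<le> M * norm v"
    using linear_bounded_pos[OF matrix_vector_mul_linear] by blast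
  define L where "L = 1 / c + B / c\<^sup>2"
  have "0 \<le> B" using B \<open>x0 \<in> S1\<close> norm_ge_zero order_trans by blast
  then have "0 < L" using \<open>0 < c\<close> by (simp add: L_def add_pos_nonneg)
  have "dist (proj_S1 (\<psi> *v x)) (proj_S1 (\<psi> *v y)) \<le> (L * M) * dist x y" if "x \<in> S1" "y \<in> S1" for x y
  proof -
    have "dist (proj_S1 (\<psi> *v x)) (proj_S1 (\<psi> *v y)) \<le> L * norm (\<psi> *v x - \<psi> *v y)"
      unfolding L_def using that x0 B by (intro dist_proj_S1_le[OF \<open>0 < c\<close>]) (simp_all add: c_def)
    also have "\<dots> \<le> L * (M * dist x y)"
      using M[of "x - y"] \<open>0 < L\<close> by (simp add: dist_norm matrix_vector_mult_diff_distrib)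
    finally show ?thesis by simp
  qed
  then show ?thesis using \<open>0 < L\<close> \<open>0 < M\<close> by (intro exI[of _ "L * M"]) simp
qed

lemma x_plus_x_minus_conj:
  assumes "\<psi> \<in> SO0_21" "g \<in> SO0_21" "hyperbolic g"
  shows "x_plus g \<in> S1" "x_minus g \<in> S1"
    and "x_plus (\<psi> ** g ** matrix_inv \<psi>) = proj_S1 (\<psi> *v x_plus g)"
    and "x_minus (\<psi> ** g ** matrix_inv \<psi>) = proj_S1 (\<psi> *v x_minus g)"
proof -
  obtain x l y m where x: "x \<in> S1" "1 < l" "g *v x = l *\<^sub>R x"
    and y: "y \<in> S1" "0 < m" "m < 1" "g *v y = m *\<^sub>R y"
    using hyperbolic_SO0_21_eigenvectors[OF assms(2,3)] .
  have "preserves_Bform g" "invertible \<psi>" "preserves_Bform \<psi>"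
    using assms(1,2) SO0_21_subset_O21 by (auto simp: O21_iff)
  then have conj: "preserves_Bform (\<psi> ** g ** matrix_inv \<psi>)"
    by (simp add: preserves_Bform_conj)
  have "x_plus g = x" "x_minus g = y"
    using x y \<open>preserves_Bform g\<close> by (simp_all add: x_plus_eqI x_minus_eqI)
  with x y show "x_plus g \<in> S1" "x_minus g \<in> S1"
    and "x_plus (\<psi> ** g ** matrix_inv \<psi>) = proj_S1 (\<psi> *v x_plus g)"
    and "x_minus (\<psi> ** g ** matrix_inv \<psi>) = proj_S1 (\<psi> *v x_minus g)"
    using conj conj_eigenvector_S1[OF assms(1)] by (simp_all add: x_plus_eqI x_minus_eqI)
qed

theorem mainTheorem16:
  fixes \<psi> :: "real^3^3"
  assumes "\<psi> \<in> SO0_21"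
  shows "\<exists>K>0. \<forall>\<epsilon>>0. \<forall>g\<in>SO0_21.
           eps_hyperbolic \<epsilon> (\<psi> ** g ** matrix_inv \<psi>) \<longrightarrow> eps_hyperbolic (\<epsilon> / K) g"
proof -
  obtain K where "K > 0"
    and K: "\<forall>x\<in>S1. \<forall>y\<in>S1. dist (proj_S1 (\<psi> *v x)) (proj_S1 (\<psi> *v y)) \<le> K * dist x y"
    using SO0_21_proj_S1_lipschitz[OF assms] by blast
  have "eps_hyperbolic (\<epsilon> / K) g"
    if g: "g \<in> SO0_21" and conj: "eps_hyperbolic \<epsilon> (\<psi> ** g ** matrix_inv \<psi>)" for \<epsilon> g
  proof -
    have "invertible \<psi>" using assms SO0_21_subset_O21 by (auto simp: O21_iff)
    with conj have hyp: "hyperbolic g" by (simp add: eps_hyperbolic_def hyperbolic_conj_iff)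
    note xpm = x_plus_x_minus_conj[OF assms g hyp]
    have "\<epsilon> \<le> dist (proj_S1 (\<psi> *v x_plus g)) (proj_S1 (\<psi> *v x_minus g))"
      using conj by (simp add: eps_hyperbolic_def xpm)
    also have "\<dots> \<le> K * dist (x_plus g) (x_minus g)" using K xpm(1,2) by blast
    finally show ?thesis
      using hyp \<open>K > 0\<close> by (simp add: eps_hyperbolic_def divide_le_eq mult.commute)
  qed
  with \<open>K > 0\<close> show ?thesis by blast
qed

end
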